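(* Let $C$ be a set of colors and $\sqsubseteq$ any preference relation on $C^\omega$. For any positive integers $n,q$, any $n$-node arena $\mathcal{A}$ over $C$, and any $q$-state strategy $S_1$ of Player 0 in $\mathcal{A}$, there exists a chromatic $(qn+1)^n$-state strategy $S_2$ of Player 0 in $\mathcal{A}$ such that for every node $v$ of $\mathcal{A}$, $S_2$ is at least as good as $S_1$ w.r.t. $\sqsubseteq$ from $v$.
   Context: A preference relation is a total preorder $\sqsubseteq$ on $C^\omega$. An arena over $C$ is a tuple $\mathcal{A} = \langle V, V_0, V_1, E\rangle$ of finite sets with $V = V_0 \sqcup V_1$, $E \subseteq V \times C \times V$, and every node having at least one outgoing edge; for $e=(s,c,t)$ write $\mathsf{source}(e)=s$, $\mathsf{col}(e)=c$, $\mathsf{target}(e)=t$. A path is a nonempty finite or infinite sequence of edges $e_1e_2\ldots$ with $\mathsf{target}(e_i)=\mathsf{source}(e_{i+1})$; for each node $v$ there is also a $0$-length path $\lambda_v$ with source and target $v$. $\mathsf{col}$ extends letterwise to sequences of edges. A strategy of Player 0 is a function $S$ assigning to each finite path $p$ with $\mathsf{target}(p)\in V_0$ an edge $S(p)$ with $\mathsf{source}(S(p))=\mathsf{target}(p)$. A path $p=e_1e_2\ldots$ is consistent with $S$ if (when $\mathsf{source}(p)\in V_0$) $e_1=S(\lambda_{\mathsf{source}(p)})$ and for each $1\le i<|p|$ with $\mathsf{target}(e_i)\in V_0$ we have $e_{i+1}=S(e_1\ldots e_i)$. For $v\in V$, $\mathsf{col}(S,v)\subseteq C^\omega$ is the set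 of $\mathsf{col}(p)$ over all infinite paths $p$ from $v$ consistent with $S$. A strategy $S_2$ is at least as good as $S_1$ w.r.t. $\sqsubseteq$ from $v$ if for every $\beta\in\mathsf{col}(S_2,v)$ there exists $\alpha\in\mathsf{col}(S_1,v)$ with $\alpha\sqsubseteq\beta$. A memory structure is $\mathcal{M}=\langle M, m_{init},\delta\rangle$ with $M$ finite, $m_{init}\in M$, $\delta: M\times E\to M$ (extended to finite edge sequences in the usual way). $S$ is an $\mathcal{M}$-strategy if for all finite paths $p_1,p_2$ with $\mathsf{target}(p_1)=\mathsf{target}(p_2)\in V_0$, $\delta(m_{init},p_1)=\delta(m_{init},p_2)$ implies $S(p_1)=S(p_2)$. $\mathcal{M}$ is chromatic if there is $\sigma: M\times C\to M$ with $\delta(m,e)=\sigma(m,\mathsf{col}(e))$ for all $m,e$. A (chromatic) $q$-state strategy is an $\mathcal{M}$-strategy for some (chromatic) memory structure $\mathcal{M}$ with $|M|=q$. *)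

theory Defs
  imports Main
begin

(* Colours: the type 'c plays the role of the colour set C.
   Infinite words over C: functions nat => 'c.
   Edges: triples (source, colour, target). *)

type_synonym ('v,'c) edge = "'v \<times> 'c \<times> 'v"

definition source :: "('v,'c) edge \<Rightarrow> 'v" where "source e = fst e"
definition col :: "('v,'c) edge \<Rightarrow> 'c" where "col e = fst (snd e)"
definition target :: "('v,'c) edge \<Rightarrow> 'v" where "target e = snd (snd e)"

definition preference :: "((nat \<Rightarrow> 'c) \<Rightarrow> (nat \<Rightarrow> 'c) \<Rightarrow> bool) \<Rightarrow> bool" where
  "preference P \<longleftrightarrow> (\<forall>a. P a a) \<and> (\<forall>a b c. P a b \<longrightarrow> P b c \<longrightarrow> P a c)
      \<and> (\<forall>a b. P a b \<or> P b a)"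

(* arena <V, V0, V1, E> with V1 = V - V0 *)
definition arena :: "'v set \<Rightarrow> 'v set \<Rightarrow> ('v,'c) edge set \<Rightarrow> bool" where
  "arena V V0 E \<longleftrightarrow> finite V \<and> V0 \<subseteq> V \<and> finite E
     \<and> (\<forall>e\<in>E. source e \<in> V \<and> target e \<in> V)
     \<and> (\<forall>v\<in>V. \<exists>e\<in>E. source e = v)"

(* A finite path is represented as (v, es): start node v and edge list es
   (es = [] is the 0-length path lambda_v). *)
definition fpath :: "'v set \<Rightarrow> ('v,'c) edge set \<Rightarrow> 'v \<Rightarrow> ('v,'c) edge list \<Rightarrow> bool" where
  "fpath V E v es \<longleftrightarrow> v \<in> V \<and> set es \<subseteq> E
     \<and> (es \<noteq> [] \<longrightarrow> source (hd es) = v)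
     \<and> (\<forall>i. Suc i < length es \<longrightarrow> target (es ! i) = source (es ! Suc i))"

definition ptarget :: "'v \<Rightarrow> ('v,'c) edge list \<Rightarrow> 'v" where
  "ptarget v es = (if es = [] then v else target (last es))"

definition strategy :: "'v set \<Rightarrow> 'v set \<Rightarrow> ('v,'c) edge set
     \<Rightarrow> ('v \<Rightarrow> ('v,'c) edge list \<Rightarrow> ('v,'c) edge) \<Rightarrow> bool" where
  "strategy V V0 E S \<longleftrightarrow> (\<forall>v es. fpath V E v es \<longrightarrow> ptarget v es \<in> V0 \<longrightarrow>
      S v es \<in> E \<and> source (S v es) = ptarget v es)"

definition colS :: "'v set \<Rightarrow> 'v set \<Rightarrow> ('v,'c) edge set
     \<Rightarrow> ('v \<Rightarrow> ('v,'c) edge list \<Rightarrow> ('v,'c) edge) \<Rightarrow> 'v \<Rightarrow> (nat \<Rightarrow> 'c) set" where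
  "colS V V0 E S v = {(\<lambda>i. col (p i)) | p.
      (\<forall>i. p i \<in> E) \<and> source (p 0) = v
      \<and> (\<forall>i. target (p i) = source (p (Suc i)))
      \<and> (v \<in> V0 \<longrightarrow> p 0 = S v [])
      \<and> (\<forall>i. target (p i) \<in> V0 \<longrightarrow> p (Suc i) = S v (map p [0..<Suc i]))}"

definition at_least_as_good ::
  "((nat \<Rightarrow> 'c) \<Rightarrow> (nat \<Rightarrow> 'c) \<Rightarrow> bool) \<Rightarrow> 'v set \<Rightarrow> 'v set \<Rightarrow> ('v,'c) edge set
     \<Rightarrow> ('v \<Rightarrow> ('v,'c) edge list \<Rightarrow> ('v,'c) edge)
     \<Rightarrow> ('v \<Rightarrow> ('v,'c) edge list \<Rightarrow> ('v,'c) edge) \<Rightarrow> 'v \<Rightarrow> bool" where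
  "at_least_as_good P V V0 E S2 S1 v \<longleftrightarrow>
     (\<forall>\<beta>\<in>colS V V0 E S2 v. \<exists>\<alpha>\<in>colS V V0 E S1 v. P \<alpha> \<beta>)"

definition memory :: "('v,'c) edge set \<Rightarrow> 'm set \<Rightarrow> 'm \<Rightarrow> ('m \<Rightarrow> ('v,'c) edge \<Rightarrow> 'm) \<Rightarrow> bool" where
  "memory E M minit \<delta> \<longleftrightarrow> finite M \<and> minit \<in> M \<and> (\<forall>m\<in>M. \<forall>e\<in>E. \<delta> m e \<in> M)"

definition delta_star :: "('m \<Rightarrow> ('v,'c) edge \<Rightarrow> 'm) \<Rightarrow> 'm \<Rightarrow> ('v,'c) edge list \<Rightarrow> 'm" where
  "delta_star \<delta> m es = foldl \<delta> m es"

definition chromatic :: "('v,'c) edge set \<Rightarrow> 'm set \<Rightarrow> ('m \<Rightarrow> ('v,'c) edge \<Rightarrow> 'm) \<Rightarrow> bool" where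
  "chromatic E M \<delta> \<longleftrightarrow> (\<exists>\<sigma>. \<forall>m\<in>M. \<forall>e\<in>E. \<delta> m e = \<sigma> m (col e))"

definition mem_strategy :: "'v set \<Rightarrow> 'v set \<Rightarrow> ('v,'c) edge set \<Rightarrow> 'm \<Rightarrow> ('m \<Rightarrow> ('v,'c) edge \<Rightarrow> 'm)
     \<Rightarrow> ('v \<Rightarrow> ('v,'c) edge list \<Rightarrow> ('v,'c) edge) \<Rightarrow> bool" where
  "mem_strategy V V0 E minit \<delta> S \<longleftrightarrow>
     (\<forall>v1 es1 v2 es2. fpath V E v1 es1 \<longrightarrow> fpath V E v2 es2 \<longrightarrow>
        ptarget v1 es1 = ptarget v2 es2 \<longrightarrow> ptarget v1 es1 \<in> V0 \<longrightarrow>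
        delta_star \<delta> minit es1 = delta_star \<delta> minit es2 \<longrightarrow> S v1 es1 = S v2 es2)"

(* q-state strategy; memory states drawn from nat (WLOG, any finite set of size q) *)
definition q_state :: "'v set \<Rightarrow> 'v set \<Rightarrow> ('v,'c) edge set \<Rightarrow> nat
     \<Rightarrow> ('v \<Rightarrow> ('v,'c) edge list \<Rightarrow> ('v,'c) edge) \<Rightarrow> bool" where
  "q_state V V0 E q S \<longleftrightarrow> (\<exists>(M::nat set) minit \<delta>. memory E M minit \<delta> \<and> card M = q
      \<and> mem_strategy V V0 E minit \<delta> S)"

definition chromatic_q_state :: "'v set \<Rightarrow> 'v set \<Rightarrow> ('v,'c) edge set \<Rightarrow> nat
     \<Rightarrow> ('v \<Rightarrow> ('v,'c) edge list \<Rightarrow> ('v,'c) edge) \<Rightarrow> bool" where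
  "chromatic_q_state V V0 E q S \<longleftrightarrow> (\<exists>(M::nat set) minit \<delta>. memory E M minit \<delta> \<and> card M = q
      \<and> chromatic E M \<delta> \<and> mem_strategy V V0 E minit \<delta> S)"

end

theory Submission
  imports Defs "HOL-Library.FuncSet" "HOL-Library.Infinite_Set"
begin

text \<open>For a node \<open>u\<close> let \<open>up u\<close> be the set of colour sequences at least as good as some
  outcome of \<open>S1\<close> from \<open>u\<close>; since the preference is total, these sets form a chain.
  The chromatic memory of \<open>S2\<close> stores for every node \<open>y\<close> either nothing or a pair
  \<open>(u, m)\<close> such that some \<open>S1\<close>-consistent play from \<open>u\<close> that produces the colours read so far
  ends in \<open>y\<close> with \<open>S1\<close> in memory state \<open>m\<close>, where \<open>u\<close> is chosen with \<open>up u\<close> least;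
  this gives \<open>(q n + 1)\<^sup>n\<close> states. At \<open>y\<close>, \<open>S2\<close> plays what \<open>S1\<close> plays in state \<open>m\<close>.

  Along a play of \<open>S2\<close> from \<open>v\<close> the stored origin at the current node can only improve, so
  some origin \<open>u\<close> with \<open>up u \<subseteq> up v\<close> recurs infinitely often. Hence every finite prefix of
  the colour sequence \<open>\<beta>\<close> of the play is produced by an \<open>S1\<close>-consistent play from \<open>u\<close>;
  by Koenig's lemma so is \<open>\<beta>\<close> itself, and \<open>\<beta> \<in> up u \<subseteq> up v\<close>.\<close>

definition extendable :: "('a list \<Rightarrow> bool) \<Rightarrow> 'a list \<Rightarrow> bool" where
  "extendable Q xs \<longleftrightarrow> (\<forall>t. \<exists>ys. Q (xs @ ys) \<and> length ys = t)"

lemma extendable_snoc: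
  assumes fin: "finite A" and alphabet: "\<And>xs. Q xs \<Longrightarrow> set xs \<subseteq> A"
    and prefix_closed: "\<And>xs k. Q xs \<Longrightarrow> Q (take k xs)"
    and ext: "extendable Q xs"
  shows "\<exists>a. extendable Q (xs @ [a])"
proof (rule ccontr)
  assume "\<nexists>a. extendable Q (xs @ [a])"
  then obtain bound where bound: "\<And>a ys. Q (xs @ a # ys) \<Longrightarrow> length ys \<noteq> bound a"
    unfolding extendable_def by (metis append_Cons append_assoc self_append_conv2)
  define t where "t = Max (bound ` A)"
  obtain ys where ys: "Q (xs @ ys)" "length ys = Suc t"
    using ext unfolding extendable_def by blast
  then obtain a zs where a: "ys = a # zs" and zs: "length zs = t"
    by (cases ys) auto
  have "a \<in> A" using alphabet[OF ys(1)] a by auto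
  then have "bound a \<le> t" unfolding t_def using fin by simp
  have "Q (take (length xs + Suc (bound a)) (xs @ ys))" using prefix_closed ys(1) by blast
  then have "Q (xs @ a # take (bound a) zs)" using a by simp
  with bound show False using \<open>bound a \<le> t\<close> zs by fastforce
qed

lemma koenig_lemma:
  assumes fin: "finite A" and alphabet: "\<And>xs. Q xs \<Longrightarrow> set xs \<subseteq> A"
    and prefix_closed: "\<And>xs k. Q xs \<Longrightarrow> Q (take k xs)"
    and unbounded: "\<And>t. \<exists>xs. Q xs \<and> length xs = t"
  obtains p where "\<And>t. Q (map p [0..<t])"
proof -
  obtain grow where grow: "\<And>xs. extendable Q xs \<Longrightarrow> extendable Q (xs @ [grow xs])"
    using extendable_snoc[of A Q, OF fin alphabet prefix_closed] by metis
  define branch where "branch t = ((\<lambda>xs. xs @ [grow xs]) ^^ t) []" for t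
  have "extendable Q (branch t)" for t
  proof (induction t)
    case 0
    show ?case by (simp add: branch_def extendable_def unbounded)
  next
    case (Suc t)
    then show ?case using grow by (simp add: branch_def)
  qed
  then have "Q (branch t)" for t
    unfolding extendable_def by (metis append_Nil2 length_0_conv)
  moreover have "map (\<lambda>i. grow (branch i)) [0..<t] = branch t" for t
    by (induction t) (simp_all add: branch_def)
  ultimately show thesis using that by metis
qed

lemma ptarget_snoc [simp]: "ptarget v (es @ [e]) = target e"
  by (simp add: ptarget_def)

lemma delta_star_snoc [simp]: "delta_star \<delta> m (es @ [e]) = \<delta> (delta_star \<delta> m es) e"
  by (simp add: delta_star_def)

lemma fpath_snoc:
  assumes "fpath V E v es" "e \<in> E" "source e = ptarget v es"
  shows "fpath V E v (es @ [e])"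
  using assms unfolding fpath_def ptarget_def
  by (auto simp: nth_append last_conv_nth less_Suc_eq split: if_splits)
    (metis One_nat_def diff_Suc_1)

lemma fpath_take:
  assumes "fpath V E v es"
  shows "fpath V E v (take k es)"
proof -
  have "take k es \<noteq> [] \<Longrightarrow> hd (take k es) = hd es" by (cases es; cases k) auto
  then show ?thesis
    using assms set_take_subset[of k es] unfolding fpath_def by (auto simp: nth_take)
qed

definition upclosure :: "('a \<Rightarrow> 'a \<Rightarrow> bool) \<Rightarrow> 'a set \<Rightarrow> 'a set" where
  "upclosure P A = {\<beta>. \<exists>\<alpha>\<in>A. P \<alpha> \<beta>}"

lemma at_least_as_good_iff_subset_upclosure:
  "at_least_as_good P V V0 E S2 S1 v \<longleftrightarrow> colS V V0 E S2 v \<subseteq> upclosure P (colS V V0 E S1 v)"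
  unfolding at_least_as_good_def upclosure_def by blast

lemma subset_upclosure: "preference P \<Longrightarrow> A \<subseteq> upclosure P A"
  unfolding preference_def upclosure_def by blast

lemma upclosure_chain:
  assumes "preference P"
  shows "upclosure P A \<subseteq> upclosure P B \<or> upclosure P B \<subseteq> upclosure P A"
proof -
  have trans: "P a b \<Longrightarrow> P b c \<Longrightarrow> P a c" and total: "P a b \<or> P b a" for a b c
    using assms unfolding preference_def by blast+
  show ?thesis
  proof (rule ccontr)
    assume "\<not> ?thesis"
    then obtain b c where "b \<in> upclosure P A" "b \<notin> upclosure P B"
      and "c \<in> upclosure P B" "c \<notin> upclosure P A"
      by blast
    then show False
      using total[of b c] trans unfolding upclosure_def by blast
  qed
qed

lemma finite_chain_has_least:
  assumes "finite A" "A \<noteq> {}" and chain: "\<And>a b. a \<in> A \<Longrightarrow> b \<in> A \<Longrightarrow> F a \<subseteq> F b \<or> F b \<subseteq> F a"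
  obtains a where "a \<in> A" "\<And>b. b \<in> A \<Longrightarrow> F a \<subseteq> F b"
proof -
  obtain a where "a \<in> A" "\<And>b. b \<in> A \<Longrightarrow> F b \<subseteq> F a \<Longrightarrow> F a = F b"
    using finite_has_minimal[of "F ` A"] assms(1,2) by auto
  then show thesis using that chain by blast
qed

lemma chromatic_q_state_of_colour_update:
  fixes \<sigma> :: "'s \<Rightarrow> 'c \<Rightarrow> 's" and S :: "'v \<Rightarrow> ('v,'c) edge list \<Rightarrow> ('v,'c) edge"
  assumes fin: "finite X" and init: "x0 \<in> X" and closed: "\<And>x c. x \<in> X \<Longrightarrow> \<sigma> x c \<in> X"
    and S: "\<And>v es. S v es = move (ptarget v es) (foldl \<sigma> x0 (map col es))"
  shows "chromatic_q_state V V0 E (card X) S"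
proof -
  obtain h where h: "bij_betw h {0..<card X} X"
    using ex_bij_betw_nat_finite[OF fin] by blast
  define enc where "enc = inv_into {0..<card X} h"
  have h_enc: "h (enc x) = x" if "x \<in> X" for x
    using that h unfolding enc_def by (simp add: bij_betw_inv_into_right)
  have enc_in: "enc x \<in> {0..<card X}" if "x \<in> X" for x
    using that h unfolding enc_def by (metis bij_betw_apply bij_betw_inv_into)
  define \<delta> where "\<delta> k e = enc (\<sigma> (h k) (col e))" for k and e :: "('v,'c) edge"
  have h_fold: "h (foldl \<delta> (enc x) es) = foldl \<sigma> x (map col es)" if "x \<in> X" for x es
    using that
  proof (induction es arbitrary: x)
    case Nil
    then show ?case by (simp add: h_enc)
  next
    case (Cons e es)
    then show ?case using closed by (simp add: \<delta>_def h_enc)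
  qed
  show ?thesis
    unfolding chromatic_q_state_def
  proof (intro exI conjI)
    show "memory E {0..<card X} (enc x0) \<delta>"
      unfolding memory_def \<delta>_def
      using enc_in init closed bij_betw_apply[OF h] by simp
    show "chromatic E {0..<card X} \<delta>"
      unfolding chromatic_def \<delta>_def by (intro exI[of _ "\<lambda>k c. enc (\<sigma> (h k) c)"]) simp
    show "mem_strategy V V0 E (enc x0) \<delta> S"
      unfolding mem_strategy_def delta_star_def S by (metis h_fold init)
  qed simp
qed

locale memory_strategy_game =
  fixes V V0 :: "'v set" and E :: "('v,'c) edge set"
    and S1 :: "'v \<Rightarrow> ('v,'c) edge list \<Rightarrow> ('v,'c) edge"
    and M :: "'m set" and minit :: 'm and \<delta> :: "'m \<Rightarrow> ('v,'c) edge \<Rightarrow> 'm"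
    and P :: "(nat \<Rightarrow> 'c) \<Rightarrow> (nat \<Rightarrow> 'c) \<Rightarrow> bool"
  assumes arena: "arena V V0 E" and strategy: "strategy V V0 E S1"
    and memory: "memory E M minit \<delta>" and mem_strategy: "mem_strategy V V0 E minit \<delta> S1"
    and preference: "preference P"
begin

lemma finite_V: "finite V" and finite_E: "finite E" and V0_subset_V: "V0 \<subseteq> V"
  and source_in_V: "e \<in> E \<Longrightarrow> source e \<in> V" and target_in_V: "e \<in> E \<Longrightarrow> target e \<in> V"
  and out_edge: "x \<in> V \<Longrightarrow> \<exists>e\<in>E. source e = x"
  using arena unfolding arena_def by auto

lemma finite_M: "finite M" and minit_in_M: "minit \<in> M"
  and \<delta>_in_M: "m \<in> M \<Longrightarrow> e \<in> E \<Longrightarrow> \<delta> m e \<in> M"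
  using memory unfolding memory_def by auto

definition consistent :: "'v \<Rightarrow> ('v,'c) edge list \<Rightarrow> bool" where
  "consistent u es \<longleftrightarrow> fpath V E u es \<and>
     (\<forall>i<length es. ptarget u (take i es) \<in> V0 \<longrightarrow> es ! i = S1 u (take i es))"

lemma consistent_Nil: "u \<in> V \<Longrightarrow> consistent u []"
  by (simp add: consistent_def fpath_def)

lemma consistent_snoc:
  assumes "consistent u es" "e \<in> E" "source e = ptarget u es"
    and "ptarget u es \<in> V0 \<longrightarrow> e = S1 u es"
  shows "consistent u (es @ [e])"
proof -
  have "fpath V E u es"
    using assms(1) unfolding consistent_def by blast
  then have "fpath V E u (es @ [e])"
    using assms(2,3) by (rule fpath_snoc)
  then show ?thesis
    using assms unfolding consistent_def by (auto simp: nth_append less_Suc_eq)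
qed

lemma consistent_take: "consistent u es \<Longrightarrow> consistent u (take k es)"
  using fpath_take unfolding consistent_def by auto

lemma consistent_upt_move:
  assumes "consistent u (map p [0..<t])" "i < t" "ptarget u (map p [0..<i]) \<in> V0"
  shows "p i = S1 u (map p [0..<i])"
  using assms unfolding consistent_def by (auto simp: take_map)

lemma consistent_upt_edge:
  assumes "consistent u (map p [0..<Suc (Suc i)])"
  shows "p i \<in> E" "target (p i) = source (p (Suc i))"
proof -
  have "fpath V E u (map p [0..<Suc (Suc i)])"
    using assms unfolding consistent_def by blast
  then show "p i \<in> E" "target (p i) = source (p (Suc i))"
    unfolding fpath_def by (auto simp del: upt_Suc simp: nth_map)
qed

lemma consistent_prefixes_imp_colS:
  assumes consistent: "\<And>t. consistent u (map p [0..<t])"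
  shows "(\<lambda>i. col (p i)) \<in> colS V V0 E S1 u"
  unfolding colS_def
proof (intro CollectI exI conjI allI impI)
  fix i
  show "p i \<in> E" "target (p i) = source (p (Suc i))"
    using consistent_upt_edge consistent by blast+
  have "ptarget u (map p [0..<Suc i]) = target (p i)"
    by (simp add: ptarget_def)
  then show "target (p i) \<in> V0 \<Longrightarrow> p (Suc i) = S1 u (map p [0..<Suc i])"
    using consistent_upt_move[OF consistent, of "Suc i" "Suc (Suc i)"] by simp
next
  show "source (p 0) = u"
    using consistent[of 1] unfolding consistent_def fpath_def by simp
  show "u \<in> V0 \<Longrightarrow> p 0 = S1 u []"
    using consistent_upt_move[OF consistent, of 0 1] by (simp add: ptarget_def)
qed simp

lemma colS_of_consistent_prefixes:
  assumes "\<And>t. \<exists>es. consistent u es \<and> map col es = map \<beta> [0..<t]"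
  shows "\<beta> \<in> colS V V0 E S1 u"
proof -
  define Q where "Q es \<longleftrightarrow> consistent u es \<and> map col es = map \<beta> [0..<length es]" for es
  have "Q (take k es)" if "Q es" for es k
  proof -
    have "map col (take k es) = take k (map \<beta> [0..<length es])"
      using that unfolding Q_def by (metis take_map)
    then have "map col (take k es) = map \<beta> [0..<length (take k es)]"
      by (simp add: take_map min_def)
    then show ?thesis
      using that consistent_take unfolding Q_def by blast
  qed
  moreover have "set es \<subseteq> E" if "Q es" for es
    using that unfolding Q_def consistent_def fpath_def by blast
  moreover have "\<exists>es. Q es \<and> length es = t" for t
    using assms[of t] unfolding Q_def by (metis length_map length_upt diff_zero)
  ultimately obtain p where p: "\<And>t. Q (map p [0..<t])"
    using koenig_lemma[of E Q] finite_E by blast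
  have "col (p i) = \<beta> i" for i
    using p[of "Suc i"] unfolding Q_def by simp
  then have "\<beta> = (\<lambda>i. col (p i))" by simp
  with p show ?thesis
    using consistent_prefixes_imp_colS unfolding Q_def by metis
qed

text \<open>The move of \<open>S1\<close> at \<open>x\<close> in memory state \<open>m\<close>: well defined because \<open>S1\<close> is a memory
  strategy, and an arbitrary outgoing edge if no path reaches \<open>x\<close> in state \<open>m\<close>.\<close>

definition memory_move :: "'v \<Rightarrow> 'm \<Rightarrow> ('v,'c) edge" where
  "memory_move x m = (SOME e. e \<in> E \<and> source e = x \<and>
     (\<forall>w es. fpath V E w es \<longrightarrow> ptarget w es = x \<longrightarrow> delta_star \<delta> minit es = m \<longrightarrow> S1 w es = e))"

lemma memory_move_spec:
  assumes "x \<in> V0"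
  shows "memory_move x m \<in> E \<and> source (memory_move x m) = x \<and>
    (\<forall>w es. fpath V E w es \<longrightarrow> ptarget w es = x \<longrightarrow> delta_star \<delta> minit es = m
       \<longrightarrow> S1 w es = memory_move x m)"
  unfolding memory_move_def
proof (rule someI_ex)
  show "\<exists>e. e \<in> E \<and> source e = x \<and> (\<forall>w es. fpath V E w es \<longrightarrow> ptarget w es = x
     \<longrightarrow> delta_star \<delta> minit es = m \<longrightarrow> S1 w es = e)"
  proof (cases "\<exists>w es. fpath V E w es \<and> ptarget w es = x \<and> delta_star \<delta> minit es = m")
    case True
    then obtain w es where "fpath V E w es" "ptarget w es = x" "delta_star \<delta> minit es = m"
      by blast
    then show ?thesis
      using assms strategy mem_strategy unfolding strategy_def mem_strategy_def by metis
  next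
    case False
    then show ?thesis using out_edge assms V0_subset_V by blast
  qed
qed

lemma memory_move_edge: "x \<in> V0 \<Longrightarrow> memory_move x m \<in> E \<and> source (memory_move x m) = x"
  using memory_move_spec by blast

lemma S1_eq_memory_move:
  "fpath V E w es \<Longrightarrow> ptarget w es \<in> V0 \<Longrightarrow>
    S1 w es = memory_move (ptarget w es) (delta_star \<delta> minit es)"
  using memory_move_spec by blast

abbreviation up :: "'v \<Rightarrow> (nat \<Rightarrow> 'c) set" where
  "up u \<equiv> upclosure P (colS V V0 E S1 u)"

definition candidates :: "('v \<Rightarrow> ('v \<times> 'm) option) \<Rightarrow> 'c \<Rightarrow> 'v \<Rightarrow> ('v \<times> 'm) set" where
  "candidates f c y = {(u, \<delta> m e) | x u m e. x \<in> V \<and> f x = Some (u, m) \<and> e \<in> E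
     \<and> source e = x \<and> target e = y \<and> col e = c \<and> (x \<in> V0 \<longrightarrow> e = memory_move x m)}"

definition least_origin :: "('v \<times> 'm) set \<Rightarrow> 'v \<times> 'm" where
  "least_origin A = (SOME pr. pr \<in> A \<and> (\<forall>pr'\<in>A. up (fst pr) \<subseteq> up (fst pr')))"

text \<open>Outside \<open>V\<close> tracks are \<open>undefined\<close>, so that they form the extensional function space
  \<open>tracks\<close> of cardinality \<open>(card V * card M + 1) ^ card V\<close>.\<close>

definition track_update :: "('v \<Rightarrow> ('v \<times> 'm) option) \<Rightarrow> 'c \<Rightarrow> 'v \<Rightarrow> ('v \<times> 'm) option" where
  "track_update f c y =
     (if y \<notin> V then undefined
      else if candidates f c y = {} then None
      else Some (least_origin (candidates f c y)))"

definition track_init :: "'v \<Rightarrow> ('v \<times> 'm) option" where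
  "track_init y = (if y \<in> V then Some (y, minit) else undefined)"

definition tracks :: "('v \<Rightarrow> ('v \<times> 'm) option) set" where
  "tracks = (\<Pi>\<^sub>E y\<in>V. insert None (Some ` (V \<times> M)))"

definition tracked_move :: "'v \<Rightarrow> ('v \<Rightarrow> ('v \<times> 'm) option) \<Rightarrow> ('v,'c) edge" where
  "tracked_move y f = memory_move y (case f y of Some (u, m) \<Rightarrow> m | None \<Rightarrow> minit)"

lemma finite_candidates: "finite (candidates f c y)"
proof (rule finite_subset)
  show "candidates f c y \<subseteq> (\<lambda>(x, e). (fst (the (f x)), \<delta> (snd (the (f x))) e)) ` (V \<times> E)"
  proof
    fix pr
    assume "pr \<in> candidates f c y"
    then obtain x u m e where "pr = (u, \<delta> m e)" "x \<in> V" "f x = Some (u, m)" "e \<in> E"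
      unfolding candidates_def by blast
    then show "pr \<in> (\<lambda>(x, e). (fst (the (f x)), \<delta> (snd (the (f x))) e)) ` (V \<times> E)"
      by (intro image_eqI[where x = "(x, e)"]) auto
  qed
  show "finite \<dots>" using finite_V finite_E by simp
qed

lemma least_origin_spec:
  assumes "finite A" "A \<noteq> {}"
  shows "least_origin A \<in> A" "pr \<in> A \<Longrightarrow> up (fst (least_origin A)) \<subseteq> up (fst pr)"
proof -
  obtain pr0 where "pr0 \<in> A" "\<And>pr. pr \<in> A \<Longrightarrow> up (fst pr0) \<subseteq> up (fst pr)"
    using finite_chain_has_least[of A "\<lambda>pr. up (fst pr)"] assms upclosure_chain[OF preference]
    by blast
  then have "\<exists>pr0. pr0 \<in> A \<and> (\<forall>pr\<in>A. up (fst pr0) \<subseteq> up (fst pr))"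
    by blast
  from someI_ex[OF this]
  show "least_origin A \<in> A" "pr \<in> A \<Longrightarrow> up (fst (least_origin A)) \<subseteq> up (fst pr)"
    unfolding least_origin_def by blast+
qed

lemma track_update_least:
  assumes "y \<in> V" "pr0 \<in> candidates f c y"
  shows "\<exists>pr. track_update f c y = Some pr \<and> up (fst pr) \<subseteq> up (fst pr0)"
proof -
  have "candidates f c y \<noteq> {}" using assms(2) by blast
  then show ?thesis
    using assms least_origin_spec(2)[OF finite_candidates] by (simp add: track_update_def)
qed

lemma track_update_SomeD:
  assumes "y \<in> V" "track_update f c y = Some pr"
  shows "pr \<in> candidates f c y"
  using assms least_origin_spec(1)[OF finite_candidates] unfolding track_update_def
  by (auto split: if_splits)

lemma track_update_follows_edge:
  assumes "x \<in> V" "f x = Some (u, m)" "e \<in> E" "source e = x"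
    and "x \<in> V0 \<longrightarrow> e = memory_move x m"
  shows "\<exists>u' m'. track_update f (col e) (target e) = Some (u', m') \<and> up u' \<subseteq> up u"
proof -
  have "(u, \<delta> m e) \<in> candidates f (col e) (target e)"
    using assms unfolding candidates_def by blast
  then show ?thesis
    using track_update_least[OF target_in_V[OF \<open>e \<in> E\<close>]] by fastforce
qed

lemma track_init_tracks: "track_init \<in> tracks"
  unfolding track_init_def tracks_def using minit_in_M by auto

lemma track_update_tracks:
  assumes "f \<in> tracks"
  shows "track_update f c \<in> tracks"
proof -
  have "track_update f c y \<in> insert None (Some ` (V \<times> M))" if "y \<in> V" for y
  proof (cases "track_update f c y")
    case (Some pr)
    then have "pr \<in> candidates f c y" using track_update_SomeD that by blast
    then obtain x u m e where "pr = (u, \<delta> m e)" "x \<in> V" "f x = Some (u, m)" "e \<in> E"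
      unfolding candidates_def by blast
    moreover have "f x \<in> insert None (Some ` (V \<times> M))"
      using assms \<open>x \<in> V\<close> unfolding tracks_def by blast
    ultimately show ?thesis using Some \<delta>_in_M[of m e] by auto
  qed simp
  moreover have "track_update f c y = undefined" if "y \<notin> V" for y
    using that by (simp add: track_update_def)
  ultimately show ?thesis
    unfolding tracks_def by (rule PiE_I)
qed

lemma card_tracks: "card tracks = (card V * card M + 1) ^ card V"
proof -
  have "card (insert None (Some ` (V \<times> M))) = card V * card M + 1"
    using finite_V finite_M by (simp add: card_image card_cartesian_product)
  then show ?thesis
    unfolding tracks_def using finite_V by (simp add: card_PiE)
qed

lemma finite_tracks: "finite tracks"
  unfolding tracks_def using finite_V finite_M by (simp add: finite_PiE)

lemma track_sound:
  assumes "x \<in> V" "foldl track_update track_init cs x = Some (u, m)"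
  shows "u \<in> V \<and> (\<exists>es. consistent u es \<and> map col es = cs \<and> ptarget u es = x
    \<and> delta_star \<delta> minit es = m)"
  using assms
proof (induction cs arbitrary: x u m rule: rev_induct)
  case Nil
  then show ?case
    using consistent_Nil by (auto simp: track_init_def ptarget_def delta_star_def)
next
  case (snoc c cs)
  then have "(u, m) \<in> candidates (foldl track_update track_init cs) c x"
    using track_update_SomeD by simp
  then obtain x0 m0 e where x0: "x0 \<in> V" "foldl track_update track_init cs x0 = Some (u, m0)"
    and e: "e \<in> E" "source e = x0" "target e = x" "col e = c" "x0 \<in> V0 \<longrightarrow> e = memory_move x0 m0"
    and m: "m = \<delta> m0 e"
    unfolding candidates_def by blast
  from snoc.IH[OF x0] obtain es where es: "u \<in> V" "consistent u es" "map col es = cs"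
    "ptarget u es = x0" "delta_star \<delta> minit es = m0"
    by blast
  have "ptarget u es \<in> V0 \<longrightarrow> e = S1 u es"
    using S1_eq_memory_move[of u es] es e unfolding consistent_def by auto
  then have "consistent u (es @ [e])"
    using consistent_snoc es e by auto
  then show ?case using es e m by auto
qed

definition tracking_strategy :: "'v \<Rightarrow> ('v,'c) edge list \<Rightarrow> ('v,'c) edge" where
  "tracking_strategy v es = tracked_move (ptarget v es) (foldl track_update track_init (map col es))"

lemma strategy_tracking_strategy: "strategy V V0 E tracking_strategy"
  unfolding strategy_def tracking_strategy_def tracked_move_def using memory_move_edge by blast

lemma chromatic_q_state_tracking_strategy:
  "chromatic_q_state V V0 E (card tracks) tracking_strategy"
  using finite_tracks track_init_tracks track_update_tracks tracking_strategy_def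
  by (rule chromatic_q_state_of_colour_update[where move = tracked_move])

lemma tracked_origins:
  assumes "v \<in> V" and "\<beta> \<in> colS V V0 E tracking_strategy v"
  obtains origin where "origin 0 = v" "\<And>t. up (origin (Suc t)) \<subseteq> up (origin t)"
    "\<And>t. origin t \<in> V" "\<And>t. \<exists>es. consistent (origin t) es \<and> map col es = map \<beta> [0..<t]"
proof -
  obtain p where p_edge: "\<And>i. p i \<in> E" and p_0: "source (p 0) = v"
    and p_chain: "\<And>i. target (p i) = source (p (Suc i))"
    and p_init: "v \<in> V0 \<longrightarrow> p 0 = tracking_strategy v []"
    and p_step: "\<And>i. target (p i) \<in> V0 \<longrightarrow> p (Suc i) = tracking_strategy v (map p [0..<Suc i])"
    and \<beta>: "\<beta> = (\<lambda>i. col (p i))"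
    using assms(2) unfolding colS_def by blast
  define W where "W t = foldl track_update track_init (map \<beta> [0..<t])" for t
  define y where "y t = source (p t)" for t
  have y_V: "y t \<in> V" for t
    unfolding y_def using source_in_V p_edge by blast
  have p_move: "y t \<in> V0 \<Longrightarrow> p t = tracked_move (y t) (W t)" for t
  proof (cases t)
    case 0
    then show "y t \<in> V0 \<Longrightarrow> ?thesis"
      using p_init p_0 by (simp add: tracking_strategy_def y_def W_def ptarget_def)
  next
    case (Suc i)
    then show "y t \<in> V0 \<Longrightarrow> ?thesis"
      using p_step[of i] p_chain[of i] by (simp add: tracking_strategy_def y_def W_def \<beta> ptarget_def comp_def)
  qed
  have step: "\<exists>u' m'. W (Suc t) (y (Suc t)) = Some (u', m') \<and> up u' \<subseteq> up u"
    if "W t (y t) = Some (u, m)" for t u m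
  proof -
    have "y t \<in> V0 \<longrightarrow> p t = memory_move (y t) m"
      using p_move that by (simp add: tracked_move_def)
    then have "\<exists>u' m'. track_update (W t) (col (p t)) (target (p t)) = Some (u', m')
        \<and> up u' \<subseteq> up u"
      using y_V that p_edge by (intro track_update_follows_edge) (simp_all add: y_def)
    moreover have "W (Suc t) = track_update (W t) (col (p t))"
      by (simp add: W_def \<beta>)
    ultimately show ?thesis
      by (simp add: y_def p_chain)
  qed
  have tracked: "\<exists>um. W t (y t) = Some um" for t
  proof (induction t)
    case 0
    then show ?case by (simp add: W_def y_def track_init_def p_0 \<open>v \<in> V\<close>)
  next
    case (Suc t)
    then show ?case using step by (metis prod.collapse)
  qed
  define origin where "origin t = fst (the (W t (y t)))" for t
  show thesis
  proof
    show "origin 0 = v"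
      by (simp add: origin_def W_def y_def track_init_def p_0 \<open>v \<in> V\<close>)
    show "up (origin (Suc t)) \<subseteq> up (origin t)" for t
      using tracked[of t] step unfolding origin_def by (metis fst_conv option.sel prod.collapse)
    show "origin t \<in> V" "\<exists>es. consistent (origin t) es \<and> map col es = map \<beta> [0..<t]" for t
      using tracked[of t] track_sound[OF y_V] unfolding origin_def W_def
      by (metis fst_conv option.sel prod.collapse)+
  qed
qed

lemma tracking_strategy_at_least_as_good:
  assumes "v \<in> V"
  shows "at_least_as_good P V V0 E tracking_strategy S1 v"
  unfolding at_least_as_good_iff_subset_upclosure
proof
  fix \<beta>
  assume "\<beta> \<in> colS V V0 E tracking_strategy v"
  then obtain origin where origin_0: "origin 0 = v"
    and origin_mono: "\<And>t. up (origin (Suc t)) \<subseteq> up (origin t)"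
    and origin_V: "\<And>t. origin t \<in> V"
    and origin_prefix: "\<And>t. \<exists>es. consistent (origin t) es \<and> map col es = map \<beta> [0..<t]"
    using tracked_origins[OF \<open>v \<in> V\<close>] by blast
  have "finite (range origin)"
    using origin_V finite_V by (metis finite_subset image_subsetI)
  then obtain u where "u \<in> range origin" and often: "infinite (origin -` {u})"
    by (rule inf_img_fin_domE) simp
  have "\<exists>es. consistent u es \<and> map col es = map \<beta> [0..<t]" for t
  proof -
    obtain t' where "t \<le> t'" "origin t' = u"
      using often unfolding infinite_nat_iff_unbounded_le by blast
    then obtain es where es: "consistent u es" "map col es = map \<beta> [0..<t']"
      using origin_prefix by blast
    have "map col (take t es) = take t (map \<beta> [0..<t'])"
      using es by (simp flip: take_map)
    also have "\<dots> = map \<beta> [0..<t]"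
      using \<open>t \<le> t'\<close> by (simp add: take_map)
    finally show ?thesis
      using consistent_take es by blast
  qed
  then have "\<beta> \<in> up u"
    using colS_of_consistent_prefixes subset_upclosure[OF preference] by blast
  also have "up u \<subseteq> up v"
    using \<open>u \<in> range origin\<close> lift_Suc_antimono_le[of "\<lambda>t. up (origin t)", OF origin_mono]
      origin_0 by auto
  finally show "\<beta> \<in> up v" .
qed

end

theorem corollary2:
  fixes P :: "(nat \<Rightarrow> 'c) \<Rightarrow> (nat \<Rightarrow> 'c) \<Rightarrow> bool"
    and V V0 :: "'v set" and E :: "('v,'c) edge set"
    and S1 :: "'v \<Rightarrow> ('v,'c) edge list \<Rightarrow> ('v,'c) edge"
    and n q :: nat
  assumes "preference P"
    and "n > 0" and "q > 0"
    and "arena V V0 E" and "card V = n"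
    and "strategy V V0 E S1" and "q_state V V0 E q S1"
  shows "\<exists>S2. strategy V V0 E S2 \<and> chromatic_q_state V V0 E ((q * n + 1) ^ n) S2
           \<and> (\<forall>v\<in>V. at_least_as_good P V V0 E S2 S1 v)"
proof -
  obtain M :: "nat set" and minit \<delta> where "memory E M minit \<delta>" "card M = q"
    and "mem_strategy V V0 E minit \<delta> S1"
    using assms(7) unfolding q_state_def by blast
  then interpret memory_strategy_game V V0 E S1 M minit \<delta> P
    using assms by unfold_locales
  have "card tracks = (q * n + 1) ^ n"
    using card_tracks \<open>card M = q\<close> \<open>card V = n\<close> by (simp add: mult.commute)
  then show ?thesis
    using strategy_tracking_strategy chromatic_q_state_tracking_strategy
      tracking_strategy_at_least_as_good by metis
qed

end
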